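(* For every positive integer $t$ there exists a constant $C=C(t)$ with the following property. Let $G$ be a bipartite graph containing no copy of $\theta_{3,t}[2]$, let $z_1,z_2$ be distinct vertices of $G$, and let $\ell=|N(z_1,z_2)|$. Let $R=\{v\in V(G)\setminus\{z_1,z_2\}: d(v,z_1,z_2)\ge C\ell^{1/2}\}$. Then the number of triples $(z',w_1,w_2)$ of distinct vertices with $z'\in R$ and $w_1,w_2\in N(z',z_1,z_2)$ is at most $C\ell^2$.
   Context: For vertices $v_1,\dots,v_k$ of a graph, $N(v_1,\dots,v_k)$ denotes their common neighbourhood and $d(v_1,\dots,v_k)=|N(v_1,\dots,v_k)|$. The theta graph $\theta_{3,t}$ is the union of $t$ paths of length $3$ sharing the same two endpoints and pairwise internally vertex-disjoint; $F[2]$ is obtained from a graph $F$ by replacing each vertex by an independent set of size $2$ and each edge by a copy of $K_{2,2}$ between the corresponding sets. *)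

theory Defs
  imports Complex_Main
begin

definition simple_graph :: "'a set \<Rightarrow> ('a \<Rightarrow> 'a \<Rightarrow> bool) \<Rightarrow> bool" where
  "simple_graph V E \<longleftrightarrow> finite V \<and> (\<forall>u v. E u v \<longrightarrow> E v u) \<and> (\<forall>u. \<not> E u u)
     \<and> (\<forall>u v. E u v \<longrightarrow> u \<in> V \<and> v \<in> V)"

definition bipartite :: "'a set \<Rightarrow> ('a \<Rightarrow> 'a \<Rightarrow> bool) \<Rightarrow> bool" where
  "bipartite V E \<longleftrightarrow> (\<exists>A B. A \<union> B = V \<and> A \<inter> B = {} \<and>
      (\<forall>u v. E u v \<longrightarrow> (u \<in> A \<and> v \<in> B) \<or> (u \<in> B \<and> v \<in> A)))"

definition contains_copy :: "'a set \<Rightarrow> ('a \<Rightarrow> 'a \<Rightarrow> bool) \<Rightarrow> 'b set \<Rightarrow> ('b \<Rightarrow> 'b \<Rightarrow> bool) \<Rightarrow> bool" where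
  "contains_copy V E VH EH \<longleftrightarrow> (\<exists>f. inj_on f VH \<and> f ` VH \<subseteq> V \<and>
      (\<forall>u\<in>VH. \<forall>v\<in>VH. EH u v \<longrightarrow> E (f u) (f v)))"

definition common_nbhd :: "'a set \<Rightarrow> ('a \<Rightarrow> 'a \<Rightarrow> bool) \<Rightarrow> 'a set \<Rightarrow> 'a set" where
  "common_nbhd V E S = {w \<in> V. \<forall>v\<in>S. E v w}"

definition common_deg :: "'a set \<Rightarrow> ('a \<Rightarrow> 'a \<Rightarrow> bool) \<Rightarrow> 'a set \<Rightarrow> nat" where
  "common_deg V E S = card (common_nbhd V E S)"

text \<open>The theta graph theta_{3,t}: endpoints TX, TY and for each i < t the path
TX - TA i - TB i - TY.\<close>
datatype theta_vert = TX | TY | TA nat | TB nat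

definition theta_V :: "nat \<Rightarrow> theta_vert set" where
  "theta_V t = {TX, TY} \<union> TA ` {..<t} \<union> TB ` {..<t}"

definition theta_arc :: "nat \<Rightarrow> theta_vert \<Rightarrow> theta_vert \<Rightarrow> bool" where
  "theta_arc t u v \<longleftrightarrow> (\<exists>i<t. (u = TX \<and> v = TA i) \<or> (u = TA i \<and> v = TB i) \<or> (u = TB i \<and> v = TY))"

definition theta_E :: "nat \<Rightarrow> theta_vert \<Rightarrow> theta_vert \<Rightarrow> bool" where
  "theta_E t u v \<longleftrightarrow> theta_arc t u v \<or> theta_arc t v u"

text \<open>Blow-up F[2]: each vertex replaced by two copies, each edge by K_{2,2}.\<close>
definition blowup2_V :: "'b set \<Rightarrow> ('b \<times> bool) set" where
  "blowup2_V VF = VF \<times> (UNIV :: bool set)"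

definition blowup2_E :: "('b \<Rightarrow> 'b \<Rightarrow> bool) \<Rightarrow> ('b \<times> bool) \<Rightarrow> ('b \<times> bool) \<Rightarrow> bool" where
  "blowup2_E EF p q \<longleftrightarrow> EF (fst p) (fst q)"

end

theory Submission
  imports Defs "HOL-Analysis.Convex"
begin

(* Let N be the common neighbourhood of z1 and z2, l = |N|, and count the cherries (z', w1, w2):
   paths w1 z' w2 with centre z' in R and distinct ends in N. Grouped by their pair of ends p,
   their number is T = sum_p |S p|, where S p is the set of common neighbours of p in R, so by
   Cauchy-Schwarz T^2 <= l^2 * sum_p |S p|^2.
   Call two vertices of S p rich if they have at least 2t + 2 common neighbours in N. If S p
   contained t disjoint rich pairs, then z1, z2, the ends of p, the rich pairs and two fresh common
   neighbours in N of each rich pair would span a copy of theta_{3,t}[2]. Hence 2t vertices cover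
   all rich pairs in S p, so |S p|^2 <= (4t + 1) |S p| + (number of poor pairs in S p), and a poor
   pair lies in fewer than (2t + 2)^2 of the sets S p. Therefore
   sum_p |S p|^2 <= (4t + 1) T + (2t + 2)^2 |R|^2. The degree condition defining R gives
   T >= |R| C^2 l / 2, which for C >= 8t + 8 makes the last term at most T^2 / (2 l^2);
   hence T <= 2 (4t + 1) l^2 <= C l^2. *)

section \<open>Matchings of pairs\<close>

(* h i False and h i True are the ends of the i-th edge; injectivity makes all 2k ends distinct. *)
definition is_matching :: "('a \<Rightarrow> 'a \<Rightarrow> bool) \<Rightarrow> 'a set \<Rightarrow> nat \<Rightarrow> (nat \<Rightarrow> bool \<Rightarrow> 'a) \<Rightarrow> bool" where
  "is_matching g S k h \<longleftrightarrow> inj_on (case_prod h) ({..<k} \<times> UNIV)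
     \<and> (\<forall>i<k. h i False \<in> S \<and> h i True \<in> S \<and> g (h i False) (h i True))"

lemma inj_on_pairs_extend:
  assumes "inj_on (case_prod h) ({..<k} \<times> UNIV)" and "u \<noteq> v"
    and "u \<notin> case_prod h ` ({..<k} \<times> UNIV)" and "v \<notin> case_prod h ` ({..<k} \<times> UNIV)"
  shows "inj_on (case_prod (h(k := \<lambda>x. if x then v else u))) ({..<Suc k} \<times> UNIV)"
proof -
  let ?h' = "case_prod (h(k := \<lambda>x. if x then v else u))"
  have old: "?h' ` ({..<k} \<times> UNIV) = case_prod h ` ({..<k} \<times> UNIV)"
    by (intro image_cong) auto
  have new: "?h' ` ({k} \<times> UNIV) = {u, v}"
    by (auto simp: image_iff)
  have "inj_on ?h' ({..<k} \<times> UNIV)"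
    using assms(1) by (auto simp: inj_on_def)
  moreover have "inj_on ?h' ({k} \<times> UNIV)"
    using assms(2) by (auto simp: inj_on_def)
  moreover have "{..<Suc k} \<times> (UNIV :: bool set) = {..<k} \<times> UNIV \<union> {k} \<times> UNIV"
    by auto
  moreover have "{..<k} \<times> UNIV - {k} \<times> UNIV = {..<k} \<times> (UNIV :: bool set)"
    and "{k} \<times> UNIV - {..<k} \<times> UNIV = {k} \<times> (UNIV :: bool set)"
    by auto
  ultimately show ?thesis
    using assms(3,4) old new by (simp add: inj_on_Un)
qed

lemma is_matching_mono: "is_matching g S k h \<Longrightarrow> S \<subseteq> T \<Longrightarrow> is_matching g T k h"
  by (auto simp: is_matching_def)

lemma matching_or_vertex_cover:
  assumes "finite S"
  shows "(\<exists>h. is_matching g S k h) \<or>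
    (\<exists>K. finite K \<and> card K \<le> 2 * k \<and> (\<forall>(b, b') \<in> S \<times> S - Id. g b b' \<longrightarrow> b \<in> K \<or> b' \<in> K))"
  using assms
proof (induction k arbitrary: S)
  case 0
  have "is_matching g S 0 h" for h
    by (simp add: is_matching_def)
  then show ?case by blast
next
  case (Suc k)
  show ?case
  proof (cases "\<exists>(b, b') \<in> S \<times> S - Id. g b b'")
    case False
    then show ?thesis by (intro disjI2 exI[of _ "{}"]) auto
  next
    case True
    then obtain b b' where edge: "b \<in> S" "b' \<in> S" "b \<noteq> b'" "g b b'" by auto
    have "finite (S - {b, b'})"
      using Suc.prems by simp
    from Suc.IH[OF this] show ?thesis
    proof (elim disjE exE conjE)
      fix h assume "is_matching g (S - {b, b'}) k h"
      then have "h i x \<in> S - {b, b'}" if "i < k" for i x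
        using that by (cases x) (auto simp: is_matching_def)
      then have "inj_on (case_prod (h(k := \<lambda>x. if x then b' else b))) ({..<Suc k} \<times> UNIV)"
        using edge(3) \<open>is_matching g (S - {b, b'}) k h\<close>
        by (intro inj_on_pairs_extend) (auto simp: is_matching_def)
      with \<open>is_matching g (S - {b, b'}) k h\<close>
      have "is_matching g S (Suc k) (h(k := \<lambda>x. if x then b' else b))"
        using edge by (auto simp: is_matching_def less_Suc_eq)
      then show ?thesis by blast
    next
      fix K assume K: "finite K" "card K \<le> 2 * k"
        "\<forall>(c, c') \<in> (S - {b, b'}) \<times> (S - {b, b'}) - Id. g c c' \<longrightarrow> c \<in> K \<or> c' \<in> K"
      have "card (insert b (insert b' K)) \<le> 2 * Suc k"
        using K(1,2) card_insert_le_m1 by (simp add: card_insert_if)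
      then show ?thesis
        using K by (intro disjI2 exI[of _ "insert b (insert b' K)"]) auto
    qed
  qed
qed

lemma card_edges_le_if_no_matching:
  assumes "finite S" and "\<nexists>h. is_matching g S k h"
  shows "card {(b, b') \<in> S \<times> S - Id. g b b'} \<le> 4 * k * card S"
proof -
  obtain K where K: "finite K" "card K \<le> 2 * k"
    and cover: "\<forall>(b, b') \<in> S \<times> S - Id. g b b' \<longrightarrow> b \<in> K \<or> b' \<in> K"
    using matching_or_vertex_cover[OF assms(1), of g k] assms(2) by blast
  have "{(b, b') \<in> S \<times> S - Id. g b b'} \<subseteq> (K \<inter> S) \<times> S \<union> S \<times> (K \<inter> S)"
    using cover by auto
  then have "card {(b, b') \<in> S \<times> S - Id. g b b'} \<le> card ((K \<inter> S) \<times> S \<union> S \<times> (K \<inter> S))"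
    using assms(1) by (intro card_mono) auto
  also have "\<dots> \<le> 2 * (card (K \<inter> S) * card S)"
    by (rule order_trans[OF card_Un_le]) (simp add: card_cartesian_product)
  also have "\<dots> \<le> 2 * (2 * k * card S)"
    using K card_mono[OF K(1), of "K \<inter> S"] by (simp add: mult_right_mono)
  finally show ?thesis by simp
qed

lemma exists_distinct_pairs:
  assumes "finite Y" and "\<forall>i<k. finite (A i) \<and> 2 * k + card Y \<le> card (A i)"
  shows "\<exists>a. inj_on (case_prod a) ({..<k} \<times> (UNIV :: bool set)) \<and> (\<forall>i<k. \<forall>x. a i x \<in> A i - Y)"
  using assms(2)
proof (induction k)
  case 0
  then show ?case by simp
next
  case (Suc k)
  have "\<forall>i<k. finite (A i) \<and> 2 * k + card Y \<le> card (A i)"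
    using Suc.prems by (auto dest: less_SucI)
  from Suc.IH[OF this] obtain a
    where a: "inj_on (case_prod a) ({..<k} \<times> (UNIV :: bool set))" "\<forall>i<k. \<forall>x. a i x \<in> A i - Y"
    by blast
  define U where "U = case_prod a ` ({..<k} \<times> UNIV)"
  have "card U \<le> 2 * k"
    using card_image_le[of "{..<k} \<times> (UNIV :: bool set)" "case_prod a"]
    by (simp add: U_def card_cartesian_product)
  then have "card (Y \<union> U) + 2 \<le> card (A k)"
    using card_Un_le[of Y U] Suc.prems by force
  also have "card (A k) \<le> card (A k - (Y \<union> U)) + card (Y \<union> U)"
    using diff_card_le_card_Diff[of "Y \<union> U" "A k"] assms(1) by (simp add: U_def)
  finally have "2 \<le> card (A k - (Y \<union> U))"
    by simp
  then obtain D where "D \<subseteq> A k - (Y \<union> U)" "card D = 2"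
    by (rule obtain_subset_with_card_n)
  then obtain u v where uv: "u \<in> A k - (Y \<union> U)" "v \<in> A k - (Y \<union> U)" "u \<noteq> v"
    unfolding card_2_iff by blast
  have "inj_on (case_prod (a(k := \<lambda>x. if x then v else u))) ({..<Suc k} \<times> UNIV)"
    using a(1) uv by (intro inj_on_pairs_extend) (auto simp: U_def)
  moreover have "\<forall>i<Suc k. \<forall>x. (a(k := \<lambda>x. if x then v else u)) i x \<in> A i - Y"
    using a(2) uv by (auto simp: less_Suc_eq)
  ultimately show ?case by blast
qed

lemma card_offdiag:
  assumes "finite X"
  shows "card (X \<times> X - Id) + card X = card X * card X"
proof -
  have "card X * card X = card (X \<times> X)"
    by (simp add: card_cartesian_product)
  also have "X \<times> X = (X \<times> X - Id) \<union> (\<lambda>x. (x, x)) ` X"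
    by auto
  also have "card \<dots> = card (X \<times> X - Id) + card ((\<lambda>x. (x, x)) ` X)"
    using assms by (intro card_Un_disjoint) auto
  also have "card ((\<lambda>x. (x, x)) ` X) = card X"
    by (rule card_image) (auto intro: inj_onI)
  finally show ?thesis ..
qed

lemma card_square_le_if_no_matching:
  assumes "finite S" and "\<nexists>h. is_matching g S k h"
  shows "card S * card S \<le> (4 * k + 1) * card S + card {(b, b') \<in> S \<times> S - Id. \<not> g b b'}"
proof -
  define good where "good = {(b, b') \<in> S \<times> S - Id. g b b'}"
  define bad where "bad = {(b, b') \<in> S \<times> S - Id. \<not> g b b'}"
  have "finite good" "finite bad"
    using assms(1) by (auto simp: good_def bad_def intro: finite_subset[of _ "S \<times> S"])
  moreover have "S \<times> S - Id \<subseteq> good \<union> bad"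
    by (auto simp: good_def bad_def)
  ultimately have "card (S \<times> S - Id) \<le> card (good \<union> bad)"
    by (intro card_mono) auto
  also have "\<dots> \<le> card good + card bad"
    by (rule card_Un_le)
  finally show ?thesis
    using card_offdiag[OF assms(1)] card_edges_le_if_no_matching[OF assms]
    unfolding good_def bad_def distrib_right mult_1 by linarith
qed

section \<open>Counting cherries\<close>

lemma quadratic_self_bound:
  fixes T r l a M C :: real
  assumes "0 \<le> r" "0 \<le> l" "1 \<le> C" "2 * a \<le> C" "8 * M\<^sup>2 \<le> C\<^sup>2"
    and quadratic: "T\<^sup>2 \<le> l\<^sup>2 * (a * T + M\<^sup>2 * r\<^sup>2)"
    and linear: "r * C\<^sup>2 * l \<le> 2 * T"
  shows "T \<le> C * l\<^sup>2"
proof (cases "T \<le> 0")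
  case True
  then show ?thesis
    using assms(3) by (smt (verit) zero_le_mult_iff zero_le_power2)
next
  case False
  have "8 * M\<^sup>2 * (r * l)\<^sup>2 \<le> C\<^sup>2 * (r * l)\<^sup>2"
    using assms(5) by (intro mult_right_mono) auto
  also have "\<dots> \<le> C\<^sup>2 * C\<^sup>2 * (r * l)\<^sup>2"
    using assms(3) by (intro mult_right_mono) (auto simp: power_increasing)
  also have "\<dots> = (r * C\<^sup>2 * l)\<^sup>2"
    by (simp add: power2_eq_square)
  also have "\<dots> \<le> (2 * T)\<^sup>2"
    using linear assms(1,2) by (intro power_mono) auto
  finally have "l\<^sup>2 * (M\<^sup>2 * r\<^sup>2) \<le> T\<^sup>2 / 2"
    by (simp add: power_mult_distrib algebra_simps)
  then have "T * T \<le> T * (2 * a * l\<^sup>2)"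
    using quadratic by (simp add: power2_eq_square algebra_simps)
  then have "T \<le> 2 * a * l\<^sup>2"
    using False by simp
  also have "\<dots> \<le> C * l\<^sup>2"
    using assms(4) by (intro mult_right_mono) auto
  finally show ?thesis .
qed

locale finite_incidence =
  fixes adj :: "'r \<Rightarrow> 'n \<Rightarrow> bool" and R :: "'r set" and N :: "'n set"
  assumes finite_R: "finite R" and finite_N: "finite N"
begin

abbreviation nbr :: "'r \<Rightarrow> 'n set" where
  "nbr b \<equiv> {w \<in> N. adj b w}"

abbreviation common_nbr :: "'n \<times> 'n \<Rightarrow> 'r set" where
  "common_nbr p \<equiv> {b \<in> R. adj b (fst p) \<and> adj b (snd p)}"

abbreviation codeg :: "'r \<Rightarrow> 'r \<Rightarrow> nat" where
  "codeg b b' \<equiv> card {w \<in> N. adj b w \<and> adj b' w}"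

abbreviation cherries :: "('r \<times> 'n \<times> 'n) set" where
  "cherries \<equiv> SIGMA b:R. nbr b \<times> nbr b - Id"

lemma card_cherries_eq_sum: "card cherries = (\<Sum>p \<in> N \<times> N - Id. card (common_nbr p))"
proof -
  have "bij_betw (\<lambda>(b, p). (p, b)) cherries (SIGMA p:N \<times> N - Id. common_nbr p)"
    by (rule bij_betw_byWitness[where f' = "\<lambda>(p, b). (b, p)"]) auto
  then have "card cherries = card (SIGMA p:N \<times> N - Id. common_nbr p)"
    by (rule bij_betw_same_card)
  also have "\<dots> = (\<Sum>p \<in> N \<times> N - Id. card (common_nbr p))"
    using finite_N finite_R by (intro card_SigmaI) auto
  finally show ?thesis .
qed

lemma card_cherries_ge:
  fixes C :: real
  assumes "2 \<le> C" and min_deg: "\<forall>b\<in>R. C * sqrt (card N) \<le> card (nbr b)"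
  shows "real (card R) * C\<^sup>2 * real (card N) \<le> 2 * real (card cherries)"
proof (cases "N = {}")
  case True
  then show ?thesis by simp
next
  case False
  then have "1 \<le> sqrt (card N)"
    using finite_N by (simp add: Suc_le_eq card_gt_0_iff)
  have "C\<^sup>2 * card N \<le> 2 * card (nbr b \<times> nbr b - Id)" if "b \<in> R" for b
  proof -
    define d where "d = real (card (nbr b))"
    have deg: "C * sqrt (card N) \<le> d"
      using min_deg that by (simp add: d_def)
    moreover have "C \<le> C * sqrt (card N)"
      using \<open>1 \<le> sqrt (card N)\<close> assms(1) by (simp add: mult_le_cancel_left1)
    ultimately have "2 \<le> d"
      using assms(1) by linarith
    moreover have "C\<^sup>2 * card N \<le> d\<^sup>2"
      using deg assms(1) power_mono[of "C * sqrt (card N)" d 2] by (simp add: power_mult_distrib)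
    moreover have "2 * d \<le> d\<^sup>2"
      using \<open>2 \<le> d\<close> by (simp add: power2_eq_square mult_right_mono)
    moreover have "card (nbr b \<times> nbr b - Id) + card (nbr b) = card (nbr b) * card (nbr b)"
      using finite_N by (simp add: card_offdiag)
    then have "card (nbr b \<times> nbr b - Id) + d = d\<^sup>2"
      unfolding d_def power2_eq_square of_nat_add[symmetric] of_nat_mult[symmetric] by (rule arg_cong)
    ultimately show ?thesis
      by linarith
  qed
  then have "(\<Sum>b\<in>R. C\<^sup>2 * card N) \<le> (\<Sum>b\<in>R. 2 * real (card (nbr b \<times> nbr b - Id)))"
    by (intro sum_mono) auto
  also have "\<dots> = 2 * card cherries"
    using finite_R finite_N by (simp add: card_SigmaI sum_distrib_left)
  finally show ?thesis
    by (simp add: mult.assoc)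
qed

lemma sum_card_sparse_pairs_le:
  "(\<Sum>p \<in> N \<times> N - Id. card {(b, b') \<in> common_nbr p \<times> common_nbr p - Id. codeg b b' < m})
     \<le> m\<^sup>2 * (card R)\<^sup>2"
proof -
  let ?sparse = "\<lambda>p. {(b, b') \<in> common_nbr p \<times> common_nbr p - Id. codeg b b' < m}"
  let ?codeg_sq = "\<lambda>q. {w \<in> N. adj (fst q) w \<and> adj (snd q) w} \<times> {w \<in> N. adj (fst q) w \<and> adj (snd q) w}"
  define Q where "Q = {q \<in> R \<times> R. codeg (fst q) (snd q) < m}"
  have "finite Q"
    using finite_R by (simp add: Q_def)
  have "(\<Sum>p \<in> N \<times> N - Id. card (?sparse p)) = card (SIGMA p:N \<times> N - Id. ?sparse p)"
    using finite_N finite_R by (intro card_SigmaI[symmetric]) (auto intro: finite_subset[of _ "R \<times> R"])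
  also have "\<dots> \<le> card (SIGMA q:Q. ?codeg_sq q)"
  proof (rule card_inj_on_le)
    show "inj_on (\<lambda>(p, q). (q, p)) (SIGMA p:N \<times> N - Id. ?sparse p)"
      by (rule inj_onI) auto
    show "(\<lambda>(p, q). (q, p)) ` (SIGMA p:N \<times> N - Id. ?sparse p) \<subseteq> (SIGMA q:Q. ?codeg_sq q)"
      by (auto simp: Q_def)
    show "finite (SIGMA q:Q. ?codeg_sq q)"
      using \<open>finite Q\<close> finite_N by auto
  qed
  also have "\<dots> = (\<Sum>q\<in>Q. (codeg (fst q) (snd q))\<^sup>2)"
    using \<open>finite Q\<close> finite_N by (simp add: card_cartesian_product power2_eq_square)
  also have "\<dots> \<le> (\<Sum>q\<in>Q. m\<^sup>2)"
    by (intro sum_mono power_mono) (auto simp: Q_def)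
  also have "\<dots> \<le> m\<^sup>2 * (card R)\<^sup>2"
    using card_mono[of "R \<times> R" Q] finite_R
    by (auto simp: Q_def card_cartesian_product power2_eq_square)
  finally show ?thesis .
qed

lemma sum_card_common_nbr_squared_le:
  assumes no_matching: "\<forall>p \<in> N \<times> N - Id.
      \<nexists>h. is_matching (\<lambda>b b'. m \<le> codeg b b') (common_nbr p) t h"
  shows "(\<Sum>p \<in> N \<times> N - Id. (real (card (common_nbr p)))\<^sup>2)
      \<le> (4 * real t + 1) * card cherries + (real m)\<^sup>2 * (real (card R))\<^sup>2"
proof -
  let ?sparse = "\<lambda>p. {(b, b') \<in> common_nbr p \<times> common_nbr p - Id. codeg b b' < m}"
  have "card (common_nbr p) * card (common_nbr p) \<le> (4 * t + 1) * card (common_nbr p) + card (?sparse p)"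
    if "p \<in> N \<times> N - Id" for p
    using card_square_le_if_no_matching[of "common_nbr p" "\<lambda>b b'. m \<le> codeg b b'" t]
      no_matching that finite_R
    by (simp add: not_le)
  then have "(\<Sum>p \<in> N \<times> N - Id. card (common_nbr p) * card (common_nbr p))
      \<le> (\<Sum>p \<in> N \<times> N - Id. (4 * t + 1) * card (common_nbr p) + card (?sparse p))"
    by (rule sum_mono)
  also have "\<dots> \<le> (4 * t + 1) * card cherries + m\<^sup>2 * (card R)\<^sup>2"
    using sum_card_sparse_pairs_le by (simp add: sum.distrib card_cherries_eq_sum sum_distrib_left)
  finally show ?thesis
    unfolding power2_eq_square of_nat_le_iff[symmetric, where 'a = real] by (simp add: algebra_simps)
qed

theorem card_cherries_le:
  fixes C :: real
  assumes C: "8 * real t + 2 \<le> C" "8 * (real m)\<^sup>2 \<le> C\<^sup>2"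
    and min_deg: "\<forall>b\<in>R. C * sqrt (card N) \<le> card (nbr b)"
    and no_matching: "\<forall>p \<in> N \<times> N - Id.
      \<nexists>h. is_matching (\<lambda>b b'. m \<le> codeg b b') (common_nbr p) t h"
  shows "real (card cherries) \<le> C * (real (card N))\<^sup>2"
proof -
  have "card (N \<times> N - Id) \<le> card N * card N"
    using finite_N card_offdiag[of N] by linarith
  then have "real (card (N \<times> N - Id)) \<le> (real (card N))\<^sup>2"
    unfolding power2_eq_square of_nat_mult[symmetric] of_nat_le_iff .
  have "(real (card cherries))\<^sup>2 = (\<Sum>p \<in> N \<times> N - Id. real (card (common_nbr p)))\<^sup>2"
    by (simp add: card_cherries_eq_sum)
  also have "\<dots> \<le> (\<Sum>p \<in> N \<times> N - Id. (real (card (common_nbr p)))\<^sup>2) * card (N \<times> N - Id)"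
    by (rule sum_squared_le_sum_of_squares)
  also have "\<dots> \<le> ((4 * real t + 1) * card cherries + (real m)\<^sup>2 * (real (card R))\<^sup>2) * (real (card N))\<^sup>2"
    using sum_card_common_nbr_squared_le[OF no_matching] \<open>real (card (N \<times> N - Id)) \<le> (real (card N))\<^sup>2\<close>
    by (intro mult_mono) (auto intro: sum_nonneg)
  finally have "(real (card cherries))\<^sup>2
      \<le> (real (card N))\<^sup>2 * ((4 * real t + 1) * card cherries + (real m)\<^sup>2 * (real (card R))\<^sup>2)"
    by (simp only: mult.commute)
  moreover have "real (card R) * C\<^sup>2 * real (card N) \<le> 2 * real (card cherries)"
    using C(1) min_deg by (intro card_cherries_ge) auto
  ultimately show ?thesis
    using C by (intro quadratic_self_bound[where a = "4 * real t + 1" and M = m]) auto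
qed

end

section \<open>Blow-ups of theta graphs in bipartite graphs\<close>

lemma common_nbhd_insert: "common_nbhd V E (insert v S) = {w \<in> common_nbhd V E S. E v w}"
  by (auto simp: common_nbhd_def)

lemma bipartite_side:
  assumes "bipartite V E"
  obtains A where "\<And>u v. E u v \<Longrightarrow> u \<in> A \<longleftrightarrow> v \<notin> A"
proof -
  obtain A B where "A \<inter> B = {}" and AB: "\<forall>u v. E u v \<longrightarrow> (u \<in> A \<and> v \<in> B) \<or> (u \<in> B \<and> v \<in> A)"
    using assms unfolding bipartite_def by blast
  then have "E u v \<Longrightarrow> u \<in> A \<longleftrightarrow> v \<notin> A" for u v
    by blast
  then show thesis
    using that by blast
qed

lemma contains_theta_blowupI:
  fixes a h :: "nat \<Rightarrow> bool \<Rightarrow> 'a"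
  assumes G: "simple_graph V E" and "{z1, z2, y1, y2} \<subseteq> V"
    and "z1 \<noteq> z2" "y1 \<noteq> y2" "{z1, z2} \<inter> {y1, y2} = {}"
    and a_inj: "inj_on (case_prod a) ({..<t} \<times> UNIV)" and h_inj: "inj_on (case_prod h) ({..<t} \<times> UNIV)"
    and a_new: "\<forall>i<t. \<forall>x. a i x \<notin> {z1, z2, y1, y2}" and h_new: "\<forall>i<t. \<forall>x. h i x \<notin> {z1, z2, y1, y2}"
    and a_ne_h: "\<forall>i<t. \<forall>j<t. \<forall>x y. a i x \<noteq> h j y"
    and edges: "\<forall>i<t. \<forall>x y. E z1 (a i x) \<and> E z2 (a i x) \<and> E (a i x) (h i y) \<and> E (h i x) y1 \<and> E (h i x) y2"
  shows "contains_copy V E (blowup2_V (theta_V t)) (blowup2_E (theta_E t))"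
proof -
  have sym: "E u v \<Longrightarrow> E v u" for u v
    using G by (auto simp: simple_graph_def)
  have in_V: "E u v \<Longrightarrow> u \<in> V \<and> v \<in> V" for u v
    using G by (auto simp: simple_graph_def)
  define f where "f = (\<lambda>(v, x). case v of TX \<Rightarrow> if x then z1 else z2 | TY \<Rightarrow> if x then y1 else y2
      | TA i \<Rightarrow> a i x | TB i \<Rightarrow> h i x)"
  have theta_V_iff: "TA i \<in> theta_V t \<longleftrightarrow> i < t" "TB i \<in> theta_V t \<longleftrightarrow> i < t" for i
    by (auto simp: theta_V_def)
  have a_eq: "a i x = a j y \<longleftrightarrow> i = j \<and> x = y" and h_eq: "h i x = h j y \<longleftrightarrow> i = j \<and> x = y"
    if "i < t" "j < t" for i j x y
    using that inj_onD[OF a_inj, of "(i, x)" "(j, y)"] inj_onD[OF h_inj, of "(i, x)" "(j, y)"] by auto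
  have "inj_on f (blowup2_V (theta_V t))"
  proof (rule inj_onI, clarify)
    fix u x v y assume "(u, x) \<in> blowup2_V (theta_V t)" "(v, y) \<in> blowup2_V (theta_V t)" "f (u, x) = f (v, y)"
    then show "u = v \<and> x = y"
      using assms(3-5) a_new h_new a_ne_h a_ne_h[rule_format, THEN not_sym]
      by (cases u; cases v) (auto simp: f_def blowup2_V_def theta_V_iff a_eq h_eq split: if_splits)
  qed
  moreover have "a i x \<in> V" "h i x \<in> V" if "i < t" for i x
    using in_V[of z1 "a i x"] in_V[of "h i x" y1] edges that by auto
  then have "f ` blowup2_V (theta_V t) \<subseteq> V"
    using assms(2) by (auto simp: f_def blowup2_V_def theta_V_def split: theta_vert.splits)
  moreover have "E (f (u, x)) (f (v, y))" if "theta_arc t u v" for u v x y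
    using that edges by (auto simp: f_def theta_arc_def)
  then have "\<forall>p\<in>blowup2_V (theta_V t). \<forall>q\<in>blowup2_V (theta_V t). blowup2_E (theta_E t) p q \<longrightarrow> E (f p) (f q)"
    using sym by (auto simp: blowup2_E_def theta_E_def)
  ultimately show ?thesis
    unfolding contains_copy_def by blast
qed

lemma contains_theta_blowup_if_matching:
  assumes G: "simple_graph V E" and "bipartite V E" and "z1 \<in> V" "z2 \<in> V" "z1 \<noteq> z2"
    and y: "y1 \<in> common_nbhd V E {z1, z2}" "y2 \<in> common_nbhd V E {z1, z2}" "y1 \<noteq> y2"
    and "S \<subseteq> common_nbhd V E {y1, y2} - {z1, z2}"
    and "is_matching (\<lambda>b b'. 2 * t + 2 \<le> card {w \<in> common_nbhd V E {z1, z2}. E b w \<and> E b' w}) S t h"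
  shows "contains_copy V E (blowup2_V (theta_V t)) (blowup2_E (theta_E t))"
proof -
  have h: "is_matching (\<lambda>b b'. 2 * t + 2 \<le> card {w \<in> common_nbhd V E {z1, z2}. E b w \<and> E b' w})
      (common_nbhd V E {y1, y2} - {z1, z2}) t h"
    using assms(9,10) by (rule is_matching_mono[rotated])
  let ?N = "common_nbhd V E {z1, z2}"
  have sym: "E u v \<Longrightarrow> E v u" for u v
    using G by (auto simp: simple_graph_def)
  have "finite V"
    using G by (simp add: simple_graph_def)
  have h_in: "h i x \<in> common_nbhd V E {y1, y2} - {z1, z2}" and
    h_codeg: "2 * t + 2 \<le> card {w \<in> ?N. E (h i False) w \<and> E (h i True) w}" if "i < t" for i x
    using h that by (cases x; auto simp: is_matching_def)+
  obtain a where a_inj: "inj_on (case_prod a) ({..<t} \<times> (UNIV :: bool set))"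
    and a_in: "\<forall>i<t. \<forall>x. a i x \<in> {w \<in> ?N. E (h i False) w \<and> E (h i True) w} - {y1, y2}"
    using exists_distinct_pairs[of "{y1, y2}" t "\<lambda>i. {w \<in> ?N. E (h i False) w \<and> E (h i True) w}"]
      h_codeg y(3) \<open>finite V\<close> by (auto simp: common_nbhd_def)
  obtain S where side: "\<And>u v. E u v \<Longrightarrow> u \<in> S \<longleftrightarrow> v \<notin> S"
    using bipartite_side[OF assms(2)] by blast
  have y_E: "E z1 y1" "E z2 y1" "E z1 y2" "E z2 y2"
    using y by (auto simp: common_nbhd_def)
  have h_E: "E (h i x) y1" "E (h i x) y2" and a_E: "E z1 (a i x)" "E z2 (a i x)" "E (a i x) (h i y)"
    if "i < t" for i x y
    using h_in[OF that, of x] a_in that sym by (cases y; auto simp: common_nbhd_def)+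
  (* z1, z2 and all h i x lie on one side of the bipartition, y1, y2 and all a i x on the other *)
  have z_side: "z2 \<in> S \<longleftrightarrow> z1 \<in> S" and y_side: "y1 \<notin> S \<longleftrightarrow> z1 \<in> S" "y2 \<notin> S \<longleftrightarrow> z1 \<in> S"
    using side y_E by metis+
  have a_side: "a i x \<notin> S \<longleftrightarrow> z1 \<in> S" and h_side: "h i x \<in> S \<longleftrightarrow> z1 \<in> S" if "i < t" for i x
    using side a_E[OF that] h_E[OF that] y_side by metis+
  show ?thesis
  proof (rule contains_theta_blowupI[OF G _ assms(5) y(3) _ a_inj])
    show "{z1, z2, y1, y2} \<subseteq> V"
      using assms(3,4) y by (auto simp: common_nbhd_def)
    show "{z1, z2} \<inter> {y1, y2} = {}"
      using z_side y_side by auto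
    show "inj_on (case_prod h) ({..<t} \<times> UNIV)"
      using h by (simp add: is_matching_def)
    show "\<forall>i<t. \<forall>x. a i x \<notin> {z1, z2, y1, y2}"
      using a_in a_side z_side by auto
    show "\<forall>i<t. \<forall>x. h i x \<notin> {z1, z2, y1, y2}"
      using h_in h_side y_side by auto
    show "\<forall>i<t. \<forall>j<t. \<forall>x y. a i x \<noteq> h j y"
      using a_side h_side by metis
    show "\<forall>i<t. \<forall>x y. E z1 (a i x) \<and> E z2 (a i x) \<and> E (a i x) (h i y) \<and> E (h i x) y1 \<and> E (h i x) y2"
      using a_E h_E by blast
  qed
qed

lemma card_cherries_le_if_theta_free:
  fixes V :: "'a set" and C :: real
  assumes G: "simple_graph V E" and "bipartite V E"
    and theta_free: "\<not> contains_copy V E (blowup2_V (theta_V t)) (blowup2_E (theta_E t))"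
    and z: "z1 \<in> V" "z2 \<in> V" "z1 \<noteq> z2" and C: "8 * real t + 8 \<le> C"
  defines "l \<equiv> common_deg V E {z1, z2}"
    and "R \<equiv> {v \<in> V - {z1, z2}. real (common_deg V E {v, z1, z2}) \<ge> C * sqrt (real (common_deg V E {z1, z2}))}"
  shows "real (card {(z', w1, w2). z' \<in> R \<and> w1 \<in> common_nbhd V E {z', z1, z2} \<and>
      w2 \<in> common_nbhd V E {z', z1, z2} \<and> z' \<noteq> w1 \<and> z' \<noteq> w2 \<and> w1 \<noteq> w2})
    \<le> C * (real l)\<^sup>2"
proof -
  define N where "N = common_nbhd V E {z1, z2}"
  have "finite V" and sym: "E u v \<Longrightarrow> E v u" and irrefl: "\<not> E u u" for u v
    using G by (auto simp: simple_graph_def)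
  then interpret finite_incidence E R N
    by unfold_locales (auto simp: R_def N_def common_nbhd_def)
  have nbr_eq: "common_nbhd V E {b, z1, z2} = nbr b" for b
    by (simp add: N_def common_nbhd_insert)
  have "{(z', w1, w2). z' \<in> R \<and> w1 \<in> common_nbhd V E {z', z1, z2} \<and>
      w2 \<in> common_nbhd V E {z', z1, z2} \<and> z' \<noteq> w1 \<and> z' \<noteq> w2 \<and> w1 \<noteq> w2} = cherries"
    using irrefl by (auto simp: nbr_eq)
  moreover have "real (card cherries) \<le> C * (real (card N))\<^sup>2"
  proof (rule card_cherries_le[where t = t and m = "2 * t + 2"])
    show "8 * real t + 2 \<le> C"
      using C by simp
    have "(8 * real t + 8)\<^sup>2 = 16 * (real (2 * t + 2))\<^sup>2"
      by (simp add: power2_eq_square algebra_simps)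
    moreover have "(8 * real t + 8)\<^sup>2 \<le> C\<^sup>2"
      using C by (intro power_mono) auto
    ultimately show "8 * (real (2 * t + 2))\<^sup>2 \<le> C\<^sup>2"
      by (smt (verit) zero_le_power2)
    show "\<forall>b\<in>R. C * sqrt (real (card N)) \<le> real (card (nbr b))"
      by (auto simp: R_def N_def common_deg_def common_nbhd_insert)
    show "\<forall>p \<in> N \<times> N - Id. \<nexists>h. is_matching (\<lambda>b b'. 2 * t + 2 \<le> codeg b b') (common_nbr p) t h"
    proof (intro ballI notI)
      fix p assume p: "p \<in> N \<times> N - Id"
      assume "\<exists>h. is_matching (\<lambda>b b'. 2 * t + 2 \<le> codeg b b') (common_nbr p) t h"
      then obtain h where "is_matching (\<lambda>b b'. 2 * t + 2 \<le> codeg b b') (common_nbr p) t h"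
        by blast
      moreover have "common_nbr p \<subseteq> common_nbhd V E {fst p, snd p} - {z1, z2}"
        by (auto simp: R_def common_nbhd_def intro: sym)
      moreover have "fst p \<in> N" "snd p \<in> N" "fst p \<noteq> snd p"
        using p by auto
      ultimately show False
        using contains_theta_blowup_if_matching[OF G assms(2) z] theta_free unfolding N_def by blast
    qed
  qed
  ultimately show ?thesis
    by (simp add: l_def N_def common_deg_def)
qed

theorem mainTheorem6:
  "\<forall>t::nat. t > 0 \<longrightarrow> (\<exists>C::real. \<forall>(V::nat set) E z1 z2.
     simple_graph V E \<and> bipartite V E \<and>
     \<not> contains_copy V E (blowup2_V (theta_V t)) (blowup2_E (theta_E t)) \<and>
     z1 \<in> V \<and> z2 \<in> V \<and> z1 \<noteq> z2 \<longrightarrow>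
     (let l = common_deg V E {z1, z2};
          R = {v \<in> V - {z1, z2}. real (common_deg V E {v, z1, z2}) \<ge> C * sqrt (real l)}
      in real (card {(z', w1, w2). z' \<in> R \<and> w1 \<in> common_nbhd V E {z', z1, z2} \<and>
                       w2 \<in> common_nbhd V E {z', z1, z2} \<and>
                       z' \<noteq> w1 \<and> z' \<noteq> w2 \<and> w1 \<noteq> w2})
         \<le> C * (real l)^2))"
  apply (intro allI impI)
  subgoal for t
    unfolding Let_def
    by (intro exI[where x = "8 * real t + 8"] allI impI card_cherries_le_if_theta_free) auto
  done

end
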